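(* Let $\mathrm{S}$ be a semicopula. Suppose that for every measurable space $(X,\mathcal{A})$, every capacity $\mu$ on $\mathcal{A}$, every $\mathcal{A}$-measurable $f\colon X\to[0,1]$ and every $a\in[0,1]$, $$\mathbf{I}_{\mathrm{S}}\big(\mu,\mathrm{S}(a,f)\big)=\mathrm{S}\big(a,\mathbf{I}_{\mathrm{S}}(\mu,f)\big),$$ where $\mathrm{S}(a,f)$ denotes the function $x\mapsto \mathrm{S}(a,f(x))$. Then $\mathrm{S}$ is associative, i.e. $\mathrm{S}(\mathrm{S}(x,y),z)=\mathrm{S}(x,\mathrm{S}(y,z))$ for all $x,y,z\in[0,1]$, and for each $a\in(0,1)$ the function $[0,1]\ni x\mapsto \mathrm{S}(a,x)$ is continuous.
   Context: A semicopula is a function $\mathrm{S}\colon[0,1]^2\to[0,1]$ that is non-decreasing in each coordinate and has neutral element $1$, i.e. $\mathrm{S}(x,1)=\mathrm{S}(1,x)=x$ for all $x\in[0,1]$. For a measurable space $(X,\mathcal{A})$ (with $X$ nonempty and $\mathcal{A}$ a $\sigma$-algebra), a capacity on $\mathcal{A}$ is a non-decreasing set function $\mu\colon\mathcal{A}\to[0,1]$ with $\mu(\emptyset)=0$ and $\mu(X)=1$. For a capacity $\mu$ and an $\mathcal{A}$-measurable $f\colon X\to[0,1]$, the generalized Sugeno integral is $$\mathbf{I}_{\mathrm{S}}(\mu,f)=\sup_{t\in[0,1]}\mathrm{S}\big(t,\mu(\{x\in X: f(x)\ge t\})\big).$$ *)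

theory Defs
  imports "HOL-Analysis.Analysis"
begin

definition semicopula :: "(real \<Rightarrow> real \<Rightarrow> real) \<Rightarrow> bool" where
  "semicopula S \<longleftrightarrow>
     (\<forall>x\<in>{0..1}. \<forall>y\<in>{0..1}. S x y \<in> {0..1}) \<and>
     (\<forall>x1\<in>{0..1}. \<forall>x2\<in>{0..1}. \<forall>y\<in>{0..1}. x1 \<le> x2 \<longrightarrow> S x1 y \<le> S x2 y) \<and>
     (\<forall>x\<in>{0..1}. \<forall>y1\<in>{0..1}. \<forall>y2\<in>{0..1}. y1 \<le> y2 \<longrightarrow> S x y1 \<le> S x y2) \<and>
     (\<forall>x\<in>{0..1}. S x 1 = x \<and> S 1 x = x)"

text \<open>Capacity on the sigma-algebra of a measurable space M (only its values on sets M matter).\<close>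
definition capacity :: "'a measure \<Rightarrow> ('a set \<Rightarrow> real) \<Rightarrow> bool" where
  "capacity M \<mu> \<longleftrightarrow>
     (\<forall>A\<in>sets M. \<mu> A \<in> {0..1}) \<and> \<mu> {} = 0 \<and> \<mu> (space M) = 1 \<and>
     (\<forall>A\<in>sets M. \<forall>B\<in>sets M. A \<subseteq> B \<longrightarrow> \<mu> A \<le> \<mu> B)"

definition gen_sugeno ::
  "(real \<Rightarrow> real \<Rightarrow> real) \<Rightarrow> 'a measure \<Rightarrow> ('a set \<Rightarrow> real) \<Rightarrow> ('a \<Rightarrow> real) \<Rightarrow> real" where
  "gen_sugeno S M \<mu> f = (SUP t\<in>{0..1}. S t (\<mu> {x\<in>space M. t \<le> f x}))"

end

theory Submission
  imports Defs
begin

text \<open>Both properties are forced by testing the homogeneity identity on very simple integrals.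
  If \<open>\<mu>\<close> is a capacity with \<open>\<mu>{p} = z\<close> and \<open>f\<close> takes the value \<open>y\<close> at \<open>p\<close> and \<open>0\<close> elsewhere,
  then the integral of \<open>f\<close> is \<open>S(y,z)\<close> and the integral of \<open>S(x,f)\<close> is \<open>S(S(x,y),z)\<close>;
  homogeneity therefore reads \<open>S(S(x,y),z) = S(x,S(y,z))\<close>.
  For continuity, \<open>x \<mapsto> S(a,x)\<close> is monotone, so only jumps can occur. A jump at \<open>x\<^sub>0\<close> from the
  left (right) is detected by the \<open>{0,1}\<close>-valued capacity whose full sets are the neighbourhoods
  of \<open>x\<^sub>0\<close> from the left (right) within \<open>[0,1]\<close>: the integral of the identity is then \<open>x\<^sub>0\<close>,
  while the integral of \<open>S(a,\<cdot>)\<close> is the one-sided limit of \<open>S(a,\<cdot>)\<close> at \<open>x\<^sub>0\<close>.\<close>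

definition sugeno_homogeneous :: "(real \<Rightarrow> real \<Rightarrow> real) \<Rightarrow> bool" where
  "sugeno_homogeneous S \<longleftrightarrow>
     (\<forall>(M :: real measure) \<mu> f a. space M \<noteq> {} \<longrightarrow> capacity M \<mu> \<longrightarrow> f \<in> borel_measurable M \<longrightarrow>
        (\<forall>x\<in>space M. f x \<in> {0..1}) \<longrightarrow> a \<in> {0..1} \<longrightarrow>
        gen_sugeno S M \<mu> (\<lambda>x. S a (f x)) = S a (gen_sugeno S M \<mu> f))"

lemma sugeno_homogeneous_count_space:
  fixes X :: "real set"
  assumes "sugeno_homogeneous S" and "X \<noteq> {}" and "capacity (count_space X) \<mu>"
    and "f ` X \<subseteq> {0..1}" and "a \<in> {0..1}"
  shows "gen_sugeno S (count_space X) \<mu> (\<lambda>x. S a (f x)) = S a (gen_sugeno S (count_space X) \<mu> f)"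
proof -
  have "space (count_space X) \<noteq> {}" "f \<in> borel_measurable (count_space X)"
    "\<forall>x\<in>space (count_space X). f x \<in> {0..1}"
    using assms(2,4) by auto
  then show ?thesis
    using assms(1,3,5) unfolding sugeno_homogeneous_def by blast
qed

lemma semicopula_range: "semicopula S \<Longrightarrow> x \<in> {0..1} \<Longrightarrow> y \<in> {0..1} \<Longrightarrow> S x y \<in> {0..1}"
  unfolding semicopula_def by auto

lemma semicopula_mono_left:
  "semicopula S \<Longrightarrow> x1 \<in> {0..1} \<Longrightarrow> x2 \<in> {0..1} \<Longrightarrow> y \<in> {0..1} \<Longrightarrow> x1 \<le> x2 \<Longrightarrow> S x1 y \<le> S x2 y"
  unfolding semicopula_def by auto

lemma semicopula_mono_right:
  "semicopula S \<Longrightarrow> x \<in> {0..1} \<Longrightarrow> y1 \<in> {0..1} \<Longrightarrow> y2 \<in> {0..1} \<Longrightarrow> y1 \<le> y2 \<Longrightarrow> S x y1 \<le> S x y2"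
  unfolding semicopula_def by auto

lemma semicopula_one_right [simp]: "semicopula S \<Longrightarrow> x \<in> {0..1} \<Longrightarrow> S x 1 = x"
  unfolding semicopula_def by auto

lemma semicopula_one_left [simp]: "semicopula S \<Longrightarrow> x \<in> {0..1} \<Longrightarrow> S 1 x = x"
  unfolding semicopula_def by auto

lemma semicopula_zero_right [simp]:
  assumes "semicopula S" and "x \<in> {0..1}"
  shows "S x 0 = 0"
proof -
  have "S x 0 \<le> S 1 0"
    using semicopula_mono_left[OF assms(1) assms(2), of 1 0] assms(2) by auto
  then show ?thesis
    using semicopula_range[OF assms, of 0] assms(1) by simp
qed

lemma semicopula_zero_left [simp]:
  assumes "semicopula S" and "x \<in> {0..1}"
  shows "S 0 x = 0"
proof -
  have "S 0 x \<le> S 0 1"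
    using semicopula_mono_right[OF assms(1) _ assms(2), of 0 1] assms(2) by auto
  then show ?thesis
    using semicopula_range[OF assms(1) _ assms(2), of 0] assms(1) by simp
qed

lemma gen_sugeno_least:
  "(\<And>t. t \<in> {0..1} \<Longrightarrow> S t (\<mu> {x\<in>space M. t \<le> f x}) \<le> B) \<Longrightarrow> gen_sugeno S M \<mu> f \<le> B"
  unfolding gen_sugeno_def by (rule cSUP_least) auto

lemma gen_sugeno_level_set_range:
  assumes "semicopula S" "capacity M \<mu>" "f \<in> borel_measurable M" "t \<in> {0..1}"
  shows "S t (\<mu> {x\<in>space M. t \<le> f x}) \<in> {0..1}"
proof -
  have "{x\<in>space M. t \<le> f x} \<in> sets M"
    using assms(3) by measurable
  then have "\<mu> {x\<in>space M. t \<le> f x} \<in> {0..1}"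
    using assms(2) unfolding capacity_def by blast
  then show ?thesis
    using assms(1,4) semicopula_range by blast
qed

lemma gen_sugeno_upper:
  assumes "semicopula S" "capacity M \<mu>" "f \<in> borel_measurable M" "t \<in> {0..1}"
  shows "S t (\<mu> {x\<in>space M. t \<le> f x}) \<le> gen_sugeno S M \<mu> f"
  unfolding gen_sugeno_def
proof (rule cSUP_upper)
  show "bdd_above ((\<lambda>t. S t (\<mu> {x\<in>space M. t \<le> f x})) ` {0..1})"
    using gen_sugeno_level_set_range[OF assms(1-3)] by (intro bdd_aboveI2[of _ _ 1]) auto
qed (use assms(4) in auto)

lemma gen_sugeno_range:
  assumes "semicopula S" "capacity M \<mu>" "f \<in> borel_measurable M"
  shows "gen_sugeno S M \<mu> f \<in> {0..1}"
proof -
  have "0 \<le> gen_sugeno S M \<mu> f"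
    using gen_sugeno_upper[OF assms, of 0] gen_sugeno_level_set_range[OF assms, of 0] by auto
  moreover have "gen_sugeno S M \<mu> f \<le> 1"
    using gen_sugeno_level_set_range[OF assms] by (intro gen_sugeno_least) auto
  ultimately show ?thesis by simp
qed

lemma gen_sugeno_ge_full_level:
  assumes "semicopula S" "capacity M \<mu>" "f \<in> borel_measurable M" "t \<in> {0..1}"
    and "\<mu> {x\<in>space M. t \<le> f x} = 1"
  shows "t \<le> gen_sugeno S M \<mu> f"
  using gen_sugeno_upper[OF assms(1-4)] assms by simp

lemma gen_sugeno_le_zero_one:
  assumes "semicopula S" and "0 \<le> B"
    and zero_one: "\<And>t. t \<in> {0..1} \<Longrightarrow> \<mu> {x\<in>space M. t \<le> f x} \<in> {0, 1}"
    and full: "\<And>t. t \<in> {0..1} \<Longrightarrow> \<mu> {x\<in>space M. t \<le> f x} = 1 \<Longrightarrow> t \<le> B"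
  shows "gen_sugeno S M \<mu> f \<le> B"
proof (rule gen_sugeno_least)
  fix t :: real assume "t \<in> {0..1}"
  then show "S t (\<mu> {x\<in>space M. t \<le> f x}) \<le> B"
    using zero_one[of t] full[of t] assms(1,2) by auto
qed

lemma gen_sugeno_point_step:
  assumes S: "semicopula S" and \<mu>: "capacity M \<mu>"
    and p: "{p} \<in> sets M" and d: "d \<in> {0..1}"
  shows "gen_sugeno S M \<mu> (\<lambda>x. if x = p then d else 0) = S d (\<mu> {p})"
proof -
  let ?f = "\<lambda>x. if x = p then d else 0"
  have space: "space M \<noteq> {}" "p \<in> space M"
    using p sets.sets_into_space by auto
  have f: "?f \<in> borel_measurable M"
    using p by (auto intro!: measurable_If_set)
  have \<mu>p: "\<mu> {p} \<in> {0..1}"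
    using \<mu> p unfolding capacity_def by blast
  have level: "{x\<in>space M. t \<le> ?f x} = (if t \<le> 0 then space M else if t \<le> d then {p} else {})"
    if "t \<in> {0..1}" for t
    using that space d by auto
  have "S t (\<mu> {x\<in>space M. t \<le> ?f x}) \<le> S d (\<mu> {p})" if t: "t \<in> {0..1}" for t
    using semicopula_mono_left[OF S t d \<mu>p] semicopula_range[OF S d \<mu>p] t S \<mu>
    by (auto simp: level[OF t] capacity_def)
  then have "gen_sugeno S M \<mu> ?f \<le> S d (\<mu> {p})"
    by (rule gen_sugeno_least)
  moreover have "S d (\<mu> {p}) \<le> gen_sugeno S M \<mu> ?f"
  proof (cases "d = 0")
    case True
    then show ?thesis
      using gen_sugeno_range[OF S \<mu> f] S \<mu>p by simp
  next
    case False
    then show ?thesis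
      using gen_sugeno_upper[OF S \<mu> f d] d by (simp add: level)
  qed
  ultimately show ?thesis by simp
qed

lemma semicopula_assoc_if_sugeno_homogeneous:
  assumes S: "semicopula S" and hom: "sugeno_homogeneous S"
    and x: "x \<in> {0..1}" and y: "y \<in> {0..1}" and z: "z \<in> {0..1}"
  shows "S (S x y) z = S x (S y z)"
proof -
  define \<mu> :: "real set \<Rightarrow> real" where "\<mu> B = (if B = {} then 0 else if B = UNIV then 1 else z)" for B
  define f :: "real \<Rightarrow> real" where "f u = (if u = 0 then y else 0)" for u
  let ?M = "count_space (UNIV :: real set)"
  have \<mu>: "capacity ?M \<mu>"
    using z by (auto simp: capacity_def \<mu>_def)
  have "{0::real} \<noteq> UNIV"
    by (metis UNIV_I singletonD zero_neq_one)
  then have \<mu>0: "\<mu> {0} = z"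
    by (simp add: \<mu>_def)
  have Sxf: "(\<lambda>u. S x (f u)) = (\<lambda>u. if u = 0 then S x y else 0)"
    using S x by (auto simp: f_def)
  have "S (S x y) z = gen_sugeno S ?M \<mu> (\<lambda>u. S x (f u))"
    unfolding Sxf using gen_sugeno_point_step[OF S \<mu>, of 0 "S x y"] semicopula_range[OF S x y] \<mu>0
    by simp
  also have "\<dots> = S x (gen_sugeno S ?M \<mu> f)"
    using y x by (intro sugeno_homogeneous_count_space[OF hom _ \<mu>]) (auto simp: f_def)
  also have "gen_sugeno S ?M \<mu> f = S y z"
    unfolding f_def using gen_sugeno_point_step[OF S \<mu> _ y, of 0] \<mu>0 by simp
  finally show ?thesis .
qed

lemma sugeno_homogeneous_no_left_jump:
  assumes S: "semicopula S" and hom: "sugeno_homogeneous S"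
    and a: "a \<in> {0..1}" and x0: "x0 \<in> {0<..1}" and e: "0 < e"
  shows "\<exists>y\<in>{0..<x0}. S a x0 - e < S a y"
proof (rule ccontr)
  assume "\<not> ?thesis"
  then have jump: "\<And>y. y \<in> {0..<x0} \<Longrightarrow> S a y \<le> S a x0 - e"
    by force
  define \<mu> :: "real set \<Rightarrow> real" where "\<mu> B = (if \<exists>y\<in>{0..<x0}. {y..1} \<subseteq> B then 1 else 0)" for B
  let ?M = "count_space {0..1::real}"
  let ?I = "gen_sugeno S ?M \<mu> (\<lambda>x. x)"
  have \<mu>: "capacity ?M \<mu>"
    using x0 unfolding capacity_def \<mu>_def by (auto 0 3)
  have I: "?I \<in> {0..1}"
    using gen_sugeno_range[OF S \<mu>] by simp
  have "x0 \<le> ?I"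
  proof (rule dense_le_bounded[of 0])
    fix w :: real assume "0 < w" "w < x0"
    moreover have "\<mu> {x\<in>space ?M. w \<le> x} = 1"
      using calculation unfolding \<mu>_def by (intro if_P bexI[of _ w]) auto
    ultimately show "w \<le> ?I"
      using x0 by (intro gen_sugeno_ge_full_level[OF S \<mu>]) auto
  qed (use x0 in auto)
  then have "S a x0 \<le> S a ?I"
    using semicopula_mono_right[OF S a _ I] x0 by auto
  also have "\<dots> = gen_sugeno S ?M \<mu> (\<lambda>x. S a x)"
    using a by (intro sugeno_homogeneous_count_space[OF hom _ \<mu>, symmetric]) auto
  also have "\<dots> \<le> S a x0 - e"
  proof (rule gen_sugeno_le_zero_one[OF S])
    show "0 \<le> S a x0 - e"
      using jump[of 0] semicopula_range[OF S a, of 0] x0 by auto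
    fix t :: real assume "\<mu> {x\<in>space ?M. t \<le> S a x} = 1"
    then obtain y where y: "y \<in> {0..<x0}" "{y..1} \<subseteq> {x\<in>space ?M. t \<le> S a x}"
      unfolding \<mu>_def by (auto split: if_splits)
    have "y \<in> {x\<in>space ?M. t \<le> S a x}"
      using y x0 by (intro subsetD[OF y(2)]) auto
    then have "t \<le> S a y"
      by simp
    then show "t \<le> S a x0 - e"
      using jump[OF y(1)] by simp
  qed (simp add: \<mu>_def)
  finally show False
    using e by simp
qed

lemma sugeno_homogeneous_no_right_jump:
  assumes S: "semicopula S" and hom: "sugeno_homogeneous S"
    and a: "a \<in> {0..1}" and x0: "x0 \<in> {0..<1}" and e: "0 < e"
  shows "\<exists>z\<in>{x0<..1}. S a z < S a x0 + e"
proof (rule ccontr)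
  assume "\<not> ?thesis"
  then have jump: "\<And>z. z \<in> {x0<..1} \<Longrightarrow> S a x0 + e \<le> S a z"
    by force
  define \<mu> :: "real set \<Rightarrow> real" where "\<mu> B = (if x0 \<in> B \<or> {x0<..1} \<subseteq> B then 1 else 0)" for B
  let ?M = "count_space {0..1::real}"
  let ?I = "gen_sugeno S ?M \<mu> (\<lambda>x. x)"
  have \<mu>: "capacity ?M \<mu>"
    using x0 by (auto simp: capacity_def \<mu>_def)
  have I: "?I \<in> {0..1}"
    using gen_sugeno_range[OF S \<mu>] by simp
  have t: "S a x0 + e \<in> {0..1}"
    using jump[of 1] semicopula_range[OF S a, of x0] x0 a e S by auto
  have "\<mu> {x\<in>space ?M. S a x0 + e \<le> S a x} = 1"
    using jump x0 unfolding \<mu>_def by (intro if_P disjI2) auto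
  then have "S a x0 + e \<le> gen_sugeno S ?M \<mu> (\<lambda>x. S a x)"
    by (intro gen_sugeno_ge_full_level[OF S \<mu> _ t]) auto
  also have "\<dots> = S a ?I"
    using a by (intro sugeno_homogeneous_count_space[OF hom _ \<mu>]) auto
  also have "\<dots> \<le> S a x0"
  proof (rule semicopula_mono_right[OF S a I])
    show "?I \<le> x0"
    proof (rule gen_sugeno_le_zero_one[OF S])
      fix t :: real assume "\<mu> {x\<in>space ?M. t \<le> x} = 1"
      then consider "t \<le> x0" | "\<And>w. x0 < w \<Longrightarrow> w < 1 \<Longrightarrow> t \<le> w"
        unfolding \<mu>_def by (fastforce split: if_splits)
      then show "t \<le> x0"
        by cases (use x0 dense_ge_bounded[of x0 1 t] in auto)
    qed (use x0 in \<open>simp_all add: \<mu>_def\<close>)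
  qed (use x0 in auto)
  finally show False
    using e by simp
qed

lemma continuous_on_mono_without_jumps:
  fixes g :: "real \<Rightarrow> real"
  assumes mono: "mono_on {a..b} g"
    and left: "\<And>x e. x \<in> {a<..b} \<Longrightarrow> 0 < e \<Longrightarrow> \<exists>y\<in>{a..<x}. g x - e < g y"
    and right: "\<And>x e. x \<in> {a..<b} \<Longrightarrow> 0 < e \<Longrightarrow> \<exists>z\<in>{x<..b}. g z < g x + e"
  shows "continuous_on {a..b} g"
  unfolding continuous_on_iff
proof (intro ballI allI impI)
  fix x e :: real assume x: "x \<in> {a..b}" and e: "0 < e"
  obtain d1 where d1: "0 < d1" "\<And>x'. x' \<in> {a..b} \<Longrightarrow> x - d1 < x' \<Longrightarrow> x' \<le> x \<Longrightarrow> g x - e < g x'"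
  proof (cases "x = a")
    case False
    then obtain y where y: "y \<in> {a..<x}" "g x - e < g y"
      using left[OF _ e] x by fastforce
    have "g x - e < g x'" if "x' \<in> {a..b}" "y < x'" for x'
      using mono_onD[OF mono, of y x'] y x that by auto
    then show ?thesis
      using y by (intro that[of "x - y"]) auto
  qed (use e x in auto)
  obtain d2 where d2: "0 < d2" "\<And>x'. x' \<in> {a..b} \<Longrightarrow> x' < x + d2 \<Longrightarrow> x \<le> x' \<Longrightarrow> g x' < g x + e"
  proof (cases "x = b")
    case False
    then obtain z where z: "z \<in> {x<..b}" "g z < g x + e"
      using right[OF _ e] x by fastforce
    have "g x' < g x + e" if "x' \<in> {a..b}" "x' < z" for x'
      using mono_onD[OF mono, of x' z] z x that by auto
    then show ?thesis
      using z by (intro that[of "z - x"]) auto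
  qed (use e x in auto)
  show "\<exists>d>0. \<forall>x'\<in>{a..b}. dist x' x < d \<longrightarrow> dist (g x') (g x) < e"
  proof (intro exI[of _ "min d1 d2"] conjI ballI impI)
    fix x' assume x': "x' \<in> {a..b}" and "dist x' x < min d1 d2"
    then have "x - d1 < x'" "x' < x + d2"
      by (auto simp: dist_real_def)
    then show "dist (g x') (g x) < e"
      using d1(2)[OF x'] d2(2)[OF x'] mono_onD[OF mono x x'] mono_onD[OF mono x' x] e
      by (cases "x' \<le> x") (auto simp: dist_real_def)
  qed (use d1 d2 in auto)
qed

theorem theorem1:
  fixes S :: "real \<Rightarrow> real \<Rightarrow> real"
  assumes semi: "semicopula S"
    and hom: "\<And>(M :: real measure) \<mu> f a.
       space M \<noteq> {} \<Longrightarrow> capacity M \<mu> \<Longrightarrow> f \<in> borel_measurable M \<Longrightarrow>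
       (\<forall>x\<in>space M. f x \<in> {0..1}) \<Longrightarrow> a \<in> {0..1} \<Longrightarrow>
       gen_sugeno S M \<mu> (\<lambda>x. S a (f x)) = S a (gen_sugeno S M \<mu> f)"
  shows "(\<forall>x\<in>{0..1}. \<forall>y\<in>{0..1}. \<forall>z\<in>{0..1}. S (S x y) z = S x (S y z)) \<and>
         (\<forall>a\<in>{0<..<1}. continuous_on {0..1} (S a))"
proof -
  have hom': "sugeno_homogeneous S"
    unfolding sugeno_homogeneous_def using hom by blast
  have cont: "continuous_on {0..1} (S a)" if "a \<in> {0..1}" for a
  proof (rule continuous_on_mono_without_jumps)
    show "mono_on {0..1} (S a)"
      using semicopula_mono_right[OF semi that] by (intro mono_onI) auto
  qed (use sugeno_homogeneous_no_left_jump[OF semi hom' that]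
         sugeno_homogeneous_no_right_jump[OF semi hom' that] in auto)
  show ?thesis
    using semicopula_assoc_if_sugeno_homogeneous[OF semi hom'] cont by auto
qed

end
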